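(* Let $T_1,\dots,T_N$ be $1$-currents in $\mathbb{R}^2$ given by oriented graphs of smooth functions $f_i:[0,1]\to\mathbb{R}$, all sharing the same two boundary points, and let $\lambda>0$ be small enough as in the standing assumption below. Then the infimum of the median objective $\sum_{i=1}^N\mathbb{F}_\lambda(T_i-T)$ over piecewise smooth $1$-currents $T$ (pieces of boundaries of sets, with the same boundary as the $T_i$) that are not graphs is not smaller than its infimum over $T$ that are oriented graphs of functions on $[0,1]$ with the same boundary. Hence the infimum in the median problem can be restricted to graphs.
   Context: The oriented graph of $f$ is the $1$-current given by integration over $\{(x,f(x)):x\in[0,1]\}$ with unit orienting vector field $(-1,-f'(x))/\sqrt{1+f'(x)^2}$. The multiscale flat norm of a $1$-current $H$ is $\mathbb{F}_\lambda(H)=\inf_S\operatorname{M}(H-\partial S)+\lambda\operatorname{M}(S)$ over $2$-currents $S$, with $\operatorname{M}$ the mass. Standing assumption: $\lambda$ is small enough that for each competitor $T$, $\mathbb{F}_\lambda(T_i-T)=\lambda\operatorname{M}(S_i)$ where $S_i$ is the bounded $2$-current with $\partial S_i=T_i-T$. *)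

theory Defs
  imports "HOL-Complex_Analysis.Complex_Analysis"
begin

definition smooth_on_unit :: "(real \<Rightarrow> real) \<Rightarrow> bool" where
  "smooth_on_unit f \<longleftrightarrow> (\<exists>D :: nat \<Rightarrow> real \<Rightarrow> real.
      (\<forall>x\<in>{0..1}. D 0 x = f x) \<and>
      (\<forall>k. \<forall>x\<in>{0..1}. (D k has_real_derivative D (Suc k) x) (at x within {0..1})))"

text \<open>Parametrisation of the oriented graph of g (points of the plane are complex numbers
  x + iy). The orienting vector is (-1,-g'), so the graph runs from (1,g 1) to (0,g 0).\<close>
definition ograph :: "(real \<Rightarrow> real) \<Rightarrow> real \<Rightarrow> complex" where
  "ograph g = (\<lambda>t. Complex (1 - t) (g (1 - t)))"

text \<open>Mass of the bounded 2-current S with boundary the closed piecewise smooth curve c: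
  the integral of |multiplicity| = |winding number of c|.\<close>
definition mass2 :: "(real \<Rightarrow> complex) \<Rightarrow> ennreal" where
  "mass2 c = (\<integral>\<^sup>+ z. (if z \<in> path_image c then 0 else ennreal (cmod (winding_number c z))) \<partial>lborel)"

text \<open>Median objective sum_i F_lambda(T_i - T), where by the standing assumption
  F_lambda(T_i - T) = lambda * M(S_i), dS_i = T_i - T.\<close>
definition median_obj :: "real \<Rightarrow> (nat \<Rightarrow> real \<Rightarrow> real) \<Rightarrow> nat \<Rightarrow> (real \<Rightarrow> complex) \<Rightarrow> ennreal" where
  "median_obj lam f N \<gamma> = (\<Sum>i<N. ennreal lam * mass2 (ograph (f i) +++ reversepath \<gamma>))"

definition competitor :: "(nat \<Rightarrow> real \<Rightarrow> real) \<Rightarrow> (real \<Rightarrow> complex) \<Rightarrow> bool" where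
  "competitor f \<gamma> \<longleftrightarrow> valid_path \<gamma> \<and> pathstart \<gamma> = Complex 1 (f 0 1)
      \<and> pathfinish \<gamma> = Complex 0 (f 0 0)"

definition is_graph_param :: "(real \<Rightarrow> complex) \<Rightarrow> bool" where
  "is_graph_param \<gamma> \<longleftrightarrow> (\<exists>g. \<forall>t\<in>{0..1}. \<gamma> t = ograph g t)"

end

theory Submission
  imports Defs
begin

text \<open>
  For \<open>z\<close> off all curves, the winding number of \<open>T\<^sub>i - T\<close> at \<open>z\<close> is \<open>\<one>\<^bsub>U\<^sub>i\<^esub>(z) + v(z)\<close>,
  where \<open>U\<^sub>i\<close> is the region under the graph of \<open>f\<^sub>i\<close> and \<open>v(z)\<close> does not depend on \<open>i\<close>, because
  all \<open>T\<^sub>i\<close> have the same endpoints. The integrand of the objective is thus \<open>\<Sum>\<^sub>i |\<one>\<^bsub>U\<^sub>i\<^esub> + v|\<close>, and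
  since a median minimises a sum of absolute deviations, it is pointwise at least
  \<open>\<Sum>\<^sub>i |\<one>\<^bsub>U\<^sub>i\<^esub> - \<one>\<^bsub>U\<^esub>|\<close>, where \<open>U\<close> is the region under the graph of the pointwise median
  \<open>m\<close> of the \<open>f\<^sub>i\<close>: the integrand for \<open>T\<close> the graph of \<open>m\<close>. Nothing else about \<open>T\<close> is used, so
  the bound holds for every competitor. Since \<open>m\<close> is merely continuous, it is replaced by a
  polynomial \<open>\<delta>\<close>-close to it, at the cost of \<open>N\<close> times the area of a \<open>\<delta>\<close>-strip around its graph.
\<close>

section \<open>Oriented graphs and their winding numbers\<close>

lemma pathstart_ograph [simp]: "pathstart (ograph h) = Complex 1 (h 1)"
  by (simp add: ograph_def pathstart_def)

lemma pathfinish_ograph [simp]: "pathfinish (ograph h) = Complex 0 (h 0)"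
  by (simp add: ograph_def pathfinish_def)

lemma path_image_ograph: "path_image (ograph h) = (\<lambda>x. Complex x (h x)) ` {0..1}"
proof -
  have "(\<lambda>t. 1 - t) ` {0..1} = {0..1::real}"
    by (auto simp: image_iff intro!: bexI[of _ "1 - _"])
  moreover have "(\<lambda>x. Complex x (h x)) ` (\<lambda>t. 1 - t) ` {0..1} = path_image (ograph h)"
    by (simp only: image_image path_image_def ograph_def)
  ultimately show ?thesis
    by simp
qed

lemma mem_path_image_ograph:
  "z \<in> path_image (ograph h) \<longleftrightarrow> 0 \<le> Re z \<and> Re z \<le> 1 \<and> Im z = h (Re z)"
  by (force simp: path_image_ograph complex_eq_iff)

lemma path_ograph:
  assumes "continuous_on {0..1} h"
  shows "path (ograph h)"
proof -
  have "continuous_on {0..1} (\<lambda>t::real. h (1 - t))"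
    by (rule continuous_on_compose2[OF assms]) (auto intro!: continuous_intros)
  then show ?thesis
    by (simp add: path_def ograph_def Complex_eq continuous_intros)
qed

lemma linepath_eq_ograph:
  "linepath (Complex 1 B) (Complex 0 A) = ograph (\<lambda>x. A + (B - A) * x)"
  by (simp add: fun_eq_iff linepath_def ograph_def complex_eq_iff algebra_simps)

lemma cnj_o_ograph: "cnj \<circ> ograph h = ograph (\<lambda>x. - h x)"
  by (simp add: fun_eq_iff ograph_def complex_eq_iff)

lemma winding_number_ograph_eq:
  assumes "path (ograph g)" "path (ograph h)"
    and "g 0 = h 0" "g 1 = h 1"
    and "0 \<le> Re z \<Longrightarrow> Re z \<le> 1 \<Longrightarrow>
           (Im z < g (Re z) \<and> Im z < h (Re z)) \<or> (g (Re z) < Im z \<and> h (Re z) < Im z)"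
  shows "winding_number (ograph g) z = winding_number (ograph h) z"
proof (rule winding_number_homotopic_paths, rule homotopic_paths_linear)
  fix t :: real
  assume t: "t \<in> {0..1}"
  show "closed_segment (ograph g t) (ograph h t) \<subseteq> - {z}"
  proof
    fix w
    assume "w \<in> closed_segment (ograph g t) (ograph h t)"
    then obtain u where u: "0 \<le> u" "u \<le> 1"
      and w: "w = Complex (1 - t) ((1 - u) * g (1 - t) + u * h (1 - t))"
      by (auto simp: closed_segment_def ograph_def complex_eq_iff algebra_simps)
    have "min (g (1 - t)) (h (1 - t)) \<le> (1 - u) * g (1 - t) + u * h (1 - t)"
      "(1 - u) * g (1 - t) + u * h (1 - t) \<le> max (g (1 - t)) (h (1 - t))"
      using u convex_bound_le[of "g (1 - t)" "max (g (1 - t)) (h (1 - t))"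
          "h (1 - t)" "1 - u" u]
        convex_bound_le[of "- g (1 - t)" "- min (g (1 - t)) (h (1 - t))"
          "- h (1 - t)" "1 - u" u]
      by (auto simp: algebra_simps)
    then show "w \<in> - {z}"
      using assms(5) t by (auto simp: w complex_eq_iff)
  qed
qed (use assms in auto)

lemma not_in_closed_segment_if_Im_pos:
  assumes "0 < Im ((b - a) * cnj (b - z))"
  shows "z \<notin> closed_segment a b"
  using assms by (simp add: closed_segment_def) (force simp: algebra_simps)

lemma winding_number_triangle_eq_1:
  assumes ab: "0 < Im ((b - a) * cnj (b - z))" and bc: "0 < Im ((c - b) * cnj (c - z))"
    and ca: "0 < Im ((a - c) * cnj (a - z))"
  shows "winding_number (linepath a b) z + winding_number (linepath b c) z
          + winding_number (linepath c a) z = 1"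
proof -
  have z: "z \<notin> closed_segment a b" "z \<notin> closed_segment b c" "z \<notin> closed_segment c a"
    using ab bc ca by (simp_all add: not_in_closed_segment_if_Im_pos)
  let ?W = "linepath a b +++ linepath b c +++ linepath c a"
  have W: "winding_number ?W z = winding_number (linepath a b) z + winding_number (linepath b c) z
          + winding_number (linepath c a) z"
    using z by (simp add: winding_number_join path_image_join)
  have "0 < Re (winding_number ?W z)"
    using winding_number_linepath_pos_lt[OF ab] winding_number_linepath_pos_lt[OF bc]
      winding_number_linepath_pos_lt[OF ca] unfolding W by simp
  moreover have "Re (winding_number ?W z) < 2"
    using winding_number_lt_half_linepath[of _ a b] winding_number_lt_half_linepath[of _ b c]
      winding_number_lt_half_linepath[of _ c a] z
    by (fastforce simp: winding_number_join path_image_join)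
  ultimately have "winding_number ?W z = 1"
    using z by (intro winding_number_eq_1) (simp_all add: path_image_join)
  then show ?thesis
    using W by simp
qed

definition tent :: "real \<Rightarrow> real \<Rightarrow> real \<Rightarrow> real \<Rightarrow> real" where
  "tent A B Y x = (if x < 1/2 then A + 2 * x * (Y - A) else B + 2 * (1 - x) * (Y - B))"

lemma ograph_tent:
  "ograph (tent A B Y) = linepath (Complex 1 B) (Complex (1/2) Y) +++ linepath (Complex (1/2) Y) (Complex 0 A)"
  by (auto simp: fun_eq_iff tent_def joinpaths_def linepath_def ograph_def complex_eq_iff algebra_simps)

lemma winding_number_tent_minus_chord:
  assumes "A + (B - A) * x < y" "y < A + 2 * x * (Y - A)" "y < B + 2 * (1 - x) * (Y - B)"
  shows "winding_number (ograph (tent A B Y)) (Complex x y)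
           - winding_number (ograph (\<lambda>x. A + (B - A) * x)) (Complex x y) = 1"
proof -
  define a b c z where "a = Complex 0 A" "b = Complex 1 B" "c = Complex (1/2) Y" "z = Complex x y"
  have "Im ((b - a) * cnj (b - z)) = y - (A + (B - A) * x)"
    "Im ((c - b) * cnj (c - z)) = (B + 2 * (1 - x) * (Y - B) - y) / 2"
    "Im ((a - c) * cnj (a - z)) = (A + 2 * x * (Y - A) - y) / 2"
    by (simp_all add: a_b_c_z_def algebra_simps)
  then have ab: "0 < Im ((b - a) * cnj (b - z))" and bc: "0 < Im ((c - b) * cnj (c - z))"
    and ca: "0 < Im ((a - c) * cnj (a - z))"
    using assms by simp_all
  have z: "z \<notin> closed_segment a b" "z \<notin> closed_segment b c" "z \<notin> closed_segment c a"
    using ab bc ca by (simp_all add: not_in_closed_segment_if_Im_pos)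
  have "winding_number (ograph (tent A B Y)) z = winding_number (linepath b c) z + winding_number (linepath c a) z"
    using z by (simp add: ograph_tent a_b_c_z_def winding_number_join)
  moreover have "winding_number (ograph (\<lambda>x. A + (B - A) * x)) z = - winding_number (linepath a b) z"
    using z winding_number_reversepath[of "linepath a b" z]
    by (simp add: a_b_c_z_def reversepath_linepath flip: linepath_eq_ograph)
  ultimately show ?thesis
    using winding_number_triangle_eq_1[OF ab bc ca] by (simp add: a_b_c_z_def algebra_simps)
qed

lemma exists_tent_above:
  fixes x y A B :: real
  assumes "0 < x" "x < 1"
  obtains Y where "y < A + 2 * x * (Y - A)" "y < B + 2 * (1 - x) * (Y - B)"
proof -
  define Y where "Y = max (A + (\<bar>y - A\<bar> + 1) / (2 * x)) (B + (\<bar>y - B\<bar> + 1) / (2 * (1 - x)))"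
  have "(\<bar>y - A\<bar> + 1) / (2 * x) \<le> Y - A" "(\<bar>y - B\<bar> + 1) / (2 * (1 - x)) \<le> Y - B"
    by (auto simp: Y_def)
  then have "\<bar>y - A\<bar> + 1 \<le> 2 * x * (Y - A)" "\<bar>y - B\<bar> + 1 \<le> 2 * (1 - x) * (Y - B)"
    using assms by (simp_all add: pos_divide_le_eq mult.commute)
  then show thesis
    by (intro that[of Y]) linarith+
qed

text \<open>The graph of \<open>h1\<close> can be pushed up to a tall tent and that of \<open>h2\<close> down to the chord
  without crossing \<open>z\<close>; tent and chord bound a triangle around \<open>z\<close>.\<close>

lemma winding_number_ograph_diff_above_chord:
  assumes "continuous_on {0..1} h1" "continuous_on {0..1} h2"
    and "h1 0 = A" "h2 0 = A" "h1 1 = B" "h2 1 = B"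
    and x: "0 < Re z" "Re z < 1" and "h2 (Re z) < Im z" "Im z < h1 (Re z)"
    and "A + (B - A) * Re z < Im z"
  shows "winding_number (ograph h1) z - winding_number (ograph h2) z = 1"
proof -
  obtain Y where Y: "Im z < A + 2 * Re z * (Y - A)" "Im z < B + 2 * (1 - Re z) * (Y - B)"
    using exists_tent_above[OF x] .
  then have "Im z < tent A B Y (Re z)"
    by (simp add: tent_def)
  then have "winding_number (ograph h1) z = winding_number (ograph (tent A B Y)) z"
    using assms by (intro winding_number_ograph_eq)
      (auto simp: path_ograph ograph_tent tent_def)
  moreover have "winding_number (ograph h2) z = winding_number (ograph (\<lambda>x. A + (B - A) * x)) z"
    using assms by (intro winding_number_ograph_eq) (auto simp: path_ograph linepath_eq_ograph[symmetric])
  moreover have "z = Complex (Re z) (Im z)"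
    by simp
  ultimately show ?thesis
    using winding_number_tent_minus_chord[OF assms(11) Y] by metis
qed

lemma winding_number_ograph_diff_between:
  assumes c: "continuous_on {0..1} h1" "continuous_on {0..1} h2"
    and e: "h1 0 = A" "h2 0 = A" "h1 1 = B" "h2 1 = B"
    and x: "0 < Re z" "Re z < 1" and btw: "h2 (Re z) < Im z" "Im z < h1 (Re z)"
    and chord: "Im z \<noteq> A + (B - A) * Re z"
  shows "winding_number (ograph h1) z - winding_number (ograph h2) z = 1"
proof (cases "A + (B - A) * Re z < Im z")
  case True
  then show ?thesis
    by (rule winding_number_ograph_diff_above_chord[OF c e x btw])
next
  case False
  \<comment> \<open>reflect in the real axis, which swaps the two graphs and puts \<open>z\<close> above the chord\<close>
  have c': "continuous_on {0..1} (\<lambda>x. - h2 x)" "continuous_on {0..1} (\<lambda>x. - h1 x)"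
    using c by (auto intro: continuous_intros)
  have "winding_number (ograph (\<lambda>x. - h2 x)) (cnj z) - winding_number (ograph (\<lambda>x. - h1 x)) (cnj z) = 1"
    using False chord btw by (intro winding_number_ograph_diff_above_chord[OF c'])
      (auto simp: e x algebra_simps)
  moreover have "winding_number (ograph (\<lambda>x. - h x)) (cnj z) = - cnj (winding_number (ograph h) z)"
    if "continuous_on {0..1} h" "Im z \<noteq> h (Re z)" for h
    using that by (simp add: winding_number_cnj path_ograph mem_path_image_ograph flip: cnj_o_ograph)
  ultimately have "cnj (winding_number (ograph h1) z - winding_number (ograph h2) z) = 1"
    using c btw by simp
  then show ?thesis
    by (metis complex_cnj_one complex_cnj_cnj)
qed

definition subgraph :: "(real \<Rightarrow> real) \<Rightarrow> complex set" where
  "subgraph h = {z. 0 \<le> Re z \<and> Re z \<le> 1 \<and> Im z < h (Re z)}"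

lemma winding_number_ograph_diff:
  assumes c: "continuous_on {0..1} h1" "continuous_on {0..1} h2"
    and e: "h1 0 = A" "h2 0 = A" "h1 1 = B" "h2 1 = B"
    and z1: "z \<notin> path_image (ograph h1)" and z2: "z \<notin> path_image (ograph h2)"
    and chord: "z \<notin> path_image (ograph (\<lambda>x. A + (B - A) * x))"
  shows "winding_number (ograph h1) z - winding_number (ograph h2) z
           = of_real (indicator (subgraph h1) z - indicator (subgraph h2) z)"
proof -
  consider (above) "0 \<le> Re z" "Re z \<le> 1" "h2 (Re z) < Im z" "Im z < h1 (Re z)"
    | (below) "0 \<le> Re z" "Re z \<le> 1" "h1 (Re z) < Im z" "Im z < h2 (Re z)"
    | (same_side) "0 \<le> Re z \<Longrightarrow> Re z \<le> 1 \<Longrightarrow>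
        (Im z < h1 (Re z) \<and> Im z < h2 (Re z)) \<or> (h1 (Re z) < Im z \<and> h2 (Re z) < Im z)"
    using z1 z2 by (fastforce simp: mem_path_image_ograph)
  then show ?thesis
  proof cases
    case above
    then have "0 < Re z" "Re z < 1"
      using e by (auto simp: order.order_iff_strict)
    then have "winding_number (ograph h1) z - winding_number (ograph h2) z = 1"
      using above chord by (intro winding_number_ograph_diff_between[OF c e]) (auto simp: mem_path_image_ograph)
    then show ?thesis
      using above by (simp add: subgraph_def)
  next
    case below
    then have "0 < Re z" "Re z < 1"
      using e by (auto simp: order.order_iff_strict)
    then have "winding_number (ograph h2) z - winding_number (ograph h1) z = 1"
      using below chord by (intro winding_number_ograph_diff_between[OF c(2,1) e(2,1,4,3)])
        (auto simp: mem_path_image_ograph)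
    then show ?thesis
      using below by (simp add: subgraph_def algebra_simps)
  next
    case same_side
    then have "winding_number (ograph h1) z = winding_number (ograph h2) z"
      using c e by (intro winding_number_ograph_eq) (auto simp: path_ograph)
    moreover have "indicator (subgraph h1) z = (indicator (subgraph h2) z :: real)"
      using same_side by (auto simp: subgraph_def indicator_def)
    ultimately show ?thesis
      by simp
  qed
qed

section \<open>Null sets and measurability\<close>

lemma smooth_on_unit_imp_continuous_differentiable:
  assumes "smooth_on_unit h"
  shows "continuous_on {0..1} h" "\<And>x. x \<in> {0<..<1} \<Longrightarrow> h differentiable (at x)"
proof -
  obtain D :: "nat \<Rightarrow> real \<Rightarrow> real" where D0: "\<forall>x\<in>{0..1}. D 0 x = h x"
    and D: "\<forall>k. \<forall>x\<in>{0..1}. (D k has_real_derivative D (Suc k) x) (at x within {0..1})"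
    using assms unfolding smooth_on_unit_def by blast
  have "continuous_on {0..1} (D 0)"
    using D by (auto simp: continuous_on_eq_continuous_within intro: DERIV_continuous)
  then show "continuous_on {0..1} h"
    using D0 by (metis continuous_on_cong)
  fix x :: real
  assume x: "x \<in> {0<..<1}"
  then have "(D 0 has_real_derivative D 1 x) (at x)"
    using D by (metis at_within_Icc_at greaterThanLessThan_iff less_eq_real_def One_nat_def atLeastAtMost_iff)
  then have "(h has_real_derivative D 1 x) (at x)"
    by (rule has_field_derivative_transform_within_open[where S = "{0<..<1}"]) (use x D0 in auto)
  then show "h differentiable (at x)"
    using real_differentiable_def by blast
qed

lemma negligible_path_image_ograph:
  assumes "continuous_on {0..1} h" "\<And>x. x \<in> {0<..<1} \<Longrightarrow> h differentiable (at x)"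
  shows "negligible (path_image (ograph h))"
proof -
  have "(\<lambda>x. Complex x (h x)) differentiable_on {0<..<1}"
  proof (rule differentiable_at_imp_differentiable_on)
    fix x :: real
    assume "x \<in> {0<..<1}"
    then obtain D where "(h has_real_derivative D) (at x)"
      using assms(2) real_differentiable_def by blast
    then have "((\<lambda>x. of_real x + \<i> * of_real (h x)) has_vector_derivative (1 + \<i> * of_real D)) (at x)"
      by (auto intro!: derivative_eq_intros)
    then show "(\<lambda>x. Complex x (h x)) differentiable (at x)"
      by (auto simp flip: Complex_eq intro: differentiableI_vector)
  qed
  then have "negligible ((\<lambda>x. Complex x (h x)) ` {0<..<1})"
    by (intro negligible_differentiable_image_lowdim) auto
  moreover have "path_image (ograph h)
      = (\<lambda>x. Complex x (h x)) ` {0<..<1} \<union> {Complex 0 (h 0), Complex 1 (h 1)}"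
    by (auto simp: path_image_ograph image_iff less_eq_real_def)
  ultimately show ?thesis
    by simp
qed

lemma negligible_path_image_valid_path:
  fixes g :: "real \<Rightarrow> complex"
  assumes "valid_path g"
  shows "negligible (path_image g)"
proof -
  obtain S where S: "finite S" and C1: "g C1_differentiable_on {0..1} - S"
    using assms by (auto simp: valid_path_def piecewise_C1_differentiable_on_def)
  have "g differentiable_on {0..1} - S"
    using C1 by (auto simp: C1_differentiable_on_def intro!: differentiable_at_imp_differentiable_on
        intro: differentiableI_vector)
  then have "negligible (g ` ({0..1} - S))"
    by (intro negligible_differentiable_image_lowdim) auto
  then have "negligible (g ` ({0..1} - S) \<union> g ` S)"
    using S by auto
  moreover have "path_image g \<subseteq> g ` ({0..1} - S) \<union> g ` S"
    by (auto simp: path_image_def)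
  ultimately show ?thesis
    by (rule negligible_subset)
qed

lemma negligible_closed_imp_null_sets:
  fixes S :: "'a::euclidean_space set"
  assumes "negligible S" "closed S"
  shows "S \<in> null_sets lborel"
  using assms by (simp add: borel_closed negligible_iff_null_sets null_sets_completion_iff)

lemma null_sets_path_image_ograph:
  assumes "continuous_on {0..1} h" "\<And>x. x \<in> {0<..<1} \<Longrightarrow> h differentiable (at x)"
  shows "path_image (ograph h) \<in> null_sets lborel"
  using assms by (intro negligible_closed_imp_null_sets negligible_path_image_ograph closed_path_image path_ograph)

lemma null_sets_path_image_valid_path:
  fixes g :: "real \<Rightarrow> complex"
  assumes "valid_path g"
  shows "path_image g \<in> null_sets lborel"
  using negligible_path_image_valid_path[OF assms] closed_path_image[OF valid_path_imp_path[OF assms]]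
  by (rule negligible_closed_imp_null_sets)

definition abs_winding_number :: "(real \<Rightarrow> complex) \<Rightarrow> complex \<Rightarrow> ennreal" where
  "abs_winding_number c z = (if z \<in> path_image c then 0 else ennreal (cmod (winding_number c z)))"

lemma mass2_eq_nn_integral: "mass2 c = (\<integral>\<^sup>+ z. abs_winding_number c z \<partial>lborel)"
  by (simp add: mass2_def abs_winding_number_def)

lemma borel_measurable_abs_winding_number:
  assumes "path c"
  shows "abs_winding_number c \<in> borel_measurable lborel"
proof -
  have closed: "closed (path_image c)"
    using assms by (simp add: closed_path_image)
  then have "continuous_on (- path_image c) (winding_number c)"
    using continuous_at_winding_number[OF assms]
    by (simp add: continuous_on_eq_continuous_at open_Compl)
  then have "continuous_on (- path_image c) (\<lambda>z. ennreal (cmod (winding_number c z)))"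
    by (intro continuous_on_ennreal continuous_intros)
  then have "(\<lambda>z. if z \<in> path_image c then 0 else ennreal (cmod (winding_number c z))) \<in> borel_measurable borel"
    using closed by (intro borel_measurable_continuous_on_if) (auto simp: borel_closed)
  then show ?thesis
    by (simp add: abs_winding_number_def[abs_def])
qed

section \<open>Medians\<close>

text \<open>The \<open>\<lceil>N/2\<rceil>\<close>-th largest of \<open>a 0, \<dots>, a (N - 1)\<close>.\<close>

definition median :: "nat \<Rightarrow> (nat \<Rightarrow> real) \<Rightarrow> real" where
  "median N a = Max ((\<lambda>S. Min (a ` S)) ` {S. S \<subseteq> {..<N} \<and> card S = (N + 1) div 2})"

lemma median_candidates:
  assumes "1 \<le> N"
  shows "finite {S. S \<subseteq> {..<N} \<and> card S = (N + 1) div 2}"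
    and "{S. S \<subseteq> {..<N} \<and> card S = (N + 1) div 2} \<noteq> {}"
    and "S \<in> {S. S \<subseteq> {..<N} \<and> card S = (N + 1) div 2} \<Longrightarrow> finite S \<and> S \<noteq> {}"
proof -
  show "finite {S. S \<subseteq> {..<N} \<and> card S = (N + 1) div 2}"
    by (rule finite_subset[of _ "Pow {..<N}"]) auto
  have "(N + 1) div 2 \<le> N"
    by presburger
  then have "{..<(N + 1) div 2} \<in> {S. S \<subseteq> {..<N} \<and> card S = (N + 1) div 2}"
    by auto
  then show "{S. S \<subseteq> {..<N} \<and> card S = (N + 1) div 2} \<noteq> {}"
    by blast
  show "finite S \<and> S \<noteq> {}" if "S \<in> {S. S \<subseteq> {..<N} \<and> card S = (N + 1) div 2}"
    using that assms finite_subset[of S "{..<N}"] by auto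
qed

lemma card_ge_median:
  assumes "1 \<le> N"
  shows "(N + 1) div 2 \<le> card {i. i < N \<and> median N a \<le> a i}"
proof -
  note cand = median_candidates[OF assms]
  have "median N a \<in> (\<lambda>S. Min (a ` S)) ` {S. S \<subseteq> {..<N} \<and> card S = (N + 1) div 2}"
    unfolding median_def using cand(1,2) by (intro Max_in) auto
  then obtain S where S: "S \<subseteq> {..<N}" "card S = (N + 1) div 2" "median N a = Min (a ` S)"
    by blast
  then have "S \<subseteq> {i. i < N \<and> median N a \<le> a i}"
    using cand(3)[of S] by auto
  then have "card S \<le> card {i. i < N \<and> median N a \<le> a i}"
    by (intro card_mono) auto
  then show ?thesis
    using S(2) by simp
qed

lemma card_gt_median:
  assumes "1 \<le> N"
  shows "card {i. i < N \<and> median N a < a i} < (N + 1) div 2"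
proof (rule ccontr)
  note cand = median_candidates[OF assms]
  assume "\<not> ?thesis"
  then have "(N + 1) div 2 \<le> card {i. i < N \<and> median N a < a i}"
    by simp
  then obtain S where S: "S \<subseteq> {i. i < N \<and> median N a < a i}" "card S = (N + 1) div 2" "finite S"
    by (rule obtain_subset_with_card_n) simp
  then have mem: "S \<in> {S. S \<subseteq> {..<N} \<and> card S = (N + 1) div 2}"
    by auto
  then have "Min (a ` S) \<le> median N a"
    unfolding median_def using cand(1) by (intro Max_ge) auto
  moreover have "median N a < Min (a ` S)"
    using S(1) cand(3)[OF mem] by (subst Min_gr_iff) auto
  ultimately show False
    by simp
qed

lemma median_const:
  assumes "1 \<le> N" "\<And>i. i < N \<Longrightarrow> a i = c"
  shows "median N a = c"
proof -
  note cand = median_candidates[OF assms(1)]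
  have "a ` S = {c}" if "S \<in> {S. S \<subseteq> {..<N} \<and> card S = (N + 1) div 2}" for S
    using cand(3)[OF that] that assms(2) by auto
  then have "(\<lambda>S. Min (a ` S)) ` {S. S \<subseteq> {..<N} \<and> card S = (N + 1) div 2} = {c}"
    using cand(2) by auto
  then show ?thesis
    by (simp add: median_def)
qed

lemma continuous_on_Max:
  fixes g :: "'i \<Rightarrow> 'a::topological_space \<Rightarrow> 'b::linorder_topology"
  assumes "finite I" "I \<noteq> {}" "\<And>i. i \<in> I \<Longrightarrow> continuous_on T (g i)"
  shows "continuous_on T (\<lambda>x. Max ((\<lambda>i. g i x) ` I))"
  using assms
proof (induction I rule: finite_ne_induct)
  case (insert i I)
  then have "continuous_on T (\<lambda>x. max (g i x) (Max ((\<lambda>i. g i x) ` I)))"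
    by (intro continuous_on_max) auto
  then show ?case
    using insert by (simp add: Max_insert)
qed simp

lemma continuous_on_Min:
  fixes g :: "'i \<Rightarrow> 'a::topological_space \<Rightarrow> 'b::linorder_topology"
  assumes "finite I" "I \<noteq> {}" "\<And>i. i \<in> I \<Longrightarrow> continuous_on T (g i)"
  shows "continuous_on T (\<lambda>x. Min ((\<lambda>i. g i x) ` I))"
  using assms
proof (induction I rule: finite_ne_induct)
  case (insert i I)
  then have "continuous_on T (\<lambda>x. min (g i x) (Min ((\<lambda>i. g i x) ` I)))"
    by (intro continuous_on_min) auto
  then show ?case
    using insert by (simp add: Min_insert)
qed simp

lemma continuous_on_median:
  assumes "1 \<le> N" "\<And>i. i < N \<Longrightarrow> continuous_on T (f i)"
  shows "continuous_on T (\<lambda>x. median N (\<lambda>i. f i x))"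
proof -
  note cand = median_candidates[OF assms(1)]
  have "continuous_on T (\<lambda>x. Min ((\<lambda>i. f i x) ` S))"
    if "S \<in> {S. S \<subseteq> {..<N} \<and> card S = (N + 1) div 2}" for S
  proof (rule continuous_on_Min)
    show "finite S" "S \<noteq> {}"
      using cand(3)[OF that] by blast+
    show "continuous_on T (f i)" if "i \<in> S" for i
      using assms(2) \<open>S \<in> _\<close> \<open>i \<in> S\<close> by blast
  qed
  then show ?thesis
    unfolding median_def using cand(1,2) by (intro continuous_on_Max)
qed

lemma sum_abs_of_bool_diff:
  fixes N :: nat and t :: real
  shows "(\<Sum>i<N. \<bar>of_bool (P i) - t\<bar>)
           = card {i. i < N \<and> P i} * \<bar>1 - t\<bar> + card {i. i < N \<and> \<not> P i} * \<bar>t\<bar>"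
proof -
  have "(\<Sum>i<N. \<bar>of_bool (P i) - t\<bar>) = (\<Sum>i<N. if P i then \<bar>1 - t\<bar> else \<bar>t\<bar>)"
    by (intro sum.cong) auto
  also have "\<dots> = (\<Sum>i\<in>{..<N} \<inter> {i. P i}. \<bar>1 - t\<bar>) + (\<Sum>i\<in>{..<N} \<inter> - {i. P i}. \<bar>t\<bar>)"
    by (rule sum.If_cases) (rule finite_lessThan)
  also have "{..<N} \<inter> {i. P i} = {i. i < N \<and> P i}"
    by auto
  also have "{..<N} \<inter> - {i. P i} = {i. i < N \<and> \<not> P i}"
    by auto
  finally show ?thesis
    by simp
qed

lemma sum_abs_of_bool_median_le:
  fixes a :: "nat \<Rightarrow> real" and t :: real
  assumes "1 \<le> N"
  shows "(\<Sum>i<N. \<bar>of_bool (y < a i) - of_bool (y < median N a)\<bar>) \<le> (\<Sum>i<N. \<bar>of_bool (y < a i) - t\<bar>)"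
proof -
  define p where "p = card {i. i < N \<and> y < a i}"
  define q where "q = card {i. i < N \<and> \<not> y < a i}"
  have "p + q = card ({i. i < N \<and> y < a i} \<union> {i. i < N \<and> \<not> y < a i})"
    unfolding p_def q_def by (rule card_Un_disjoint[symmetric]) auto
  also have "{i. i < N \<and> y < a i} \<union> {i. i < N \<and> \<not> y < a i} = {..<N}"
    by auto
  finally have "p + q = N"
    by simp
  have sum_eq: "(\<Sum>i<N. \<bar>of_bool (y < a i) - s\<bar>) = p * \<bar>1 - s\<bar> + q * \<bar>s\<bar>" for s :: real
    unfolding p_def q_def by (rule sum_abs_of_bool_diff)
  \<comment> \<open>the median lies on the side of \<open>y\<close> where the majority of the \<open>a i\<close> lie\<close>
  have lhs: "(\<Sum>i<N. \<bar>of_bool (y < a i) - of_bool (y < median N a)\<bar>) = real (min p q)"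
  proof (cases "y < median N a")
    case True
    then have "card {i. i < N \<and> median N a \<le> a i} \<le> p"
      unfolding p_def by (intro card_mono) auto
    with card_ge_median[OF assms, of a] \<open>p + q = N\<close> have "q \<le> p"
      by presburger
    then show ?thesis
      using True sum_eq[of 1] by simp
  next
    case False
    then have "p \<le> card {i. i < N \<and> median N a < a i}"
      unfolding p_def by (intro card_mono) auto
    with card_gt_median[OF assms, of a] \<open>p + q = N\<close> have "p \<le> q"
      by presburger
    then show ?thesis
      using False sum_eq[of 0] by simp
  qed
  have "1 \<le> \<bar>1 - t\<bar> + \<bar>t\<bar>"
    by linarith
  then have "real (min p q) \<le> min p q * (\<bar>1 - t\<bar> + \<bar>t\<bar>)"
    by (simp add: mult_le_cancel_left1)
  also have "\<dots> = min p q * \<bar>1 - t\<bar> + min p q * \<bar>t\<bar>"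
    by (simp add: distrib_left)
  also have "\<dots> \<le> p * \<bar>1 - t\<bar> + q * \<bar>t\<bar>"
    by (intro add_mono mult_right_mono) auto
  finally show ?thesis
    by (simp add: lhs sum_eq)
qed

lemma sum_abs_indicator_subgraph_median_le:
  fixes t :: real
  assumes "1 \<le> N"
  shows "(\<Sum>i<N. \<bar>indicator (subgraph (f i)) z - indicator (subgraph (\<lambda>x. median N (\<lambda>i. f i x))) z\<bar>)
           \<le> (\<Sum>i<N. \<bar>indicator (subgraph (f i)) z - t\<bar>)"
proof (cases "0 \<le> Re z \<and> Re z \<le> 1")
  case True
  then show ?thesis
    using sum_abs_of_bool_median_le[OF assms, of "Im z" "\<lambda>i. f i (Re z)" t]
    by (simp add: subgraph_def indicator_def)
next
  case False
  then have "indicator (subgraph h) z = (0::real)" for h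
    by (auto simp: subgraph_def)
  then show ?thesis
    by (simp add: sum_nonneg)
qed

section \<open>Approximating the median graph\<close>

lemma valid_path_ograph_polynomial:
  assumes "real_polynomial_function p"
  shows "valid_path (ograph p)"
proof (rule valid_path_polynomial_function)
  have "real_polynomial_function (\<lambda>t::real. 1 - t)"
    by (intro real_polynomial_function_diff) (auto intro: bounded_linear_ident)
  moreover have "real_polynomial_function (p \<circ> (\<lambda>t::real. 1 - t))"
    using calculation assms by (intro real_polynomial_function_compose) (simp_all add: real_polynomial_function_eq)
  ultimately show "polynomial_function (ograph p)"
    by (simp add: polynomial_function_iff_Basis_inner Basis_complex_def ograph_def o_def)
qed

lemma exists_polynomial_near:
  fixes m :: "real \<Rightarrow> real"
  assumes "continuous_on {0..1} m" "0 < \<delta>"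
  obtains p where "real_polynomial_function p" "p 0 = m 0" "p 1 = m 1"
    "\<And>x. x \<in> {0..1} \<Longrightarrow> \<bar>p x - m x\<bar> \<le> \<delta>"
proof -
  obtain g where g: "real_polynomial_function g" "\<And>x. x \<in> {0..1} \<Longrightarrow> \<bar>m x - g x\<bar> < \<delta> / 3"
    using Stone_Weierstrass_real_polynomial_function[of "{0..1::real}" m "\<delta> / 3"] assms by auto
  \<comment> \<open>correct the endpoint errors by a linear function, which costs at most \<open>2\<delta>/3\<close>\<close>
  define p where "p x = g x + (m 0 - g 0) * (1 - x) + (m 1 - g 1) * x" for x
  have "real_polynomial_function p"
    unfolding p_def[abs_def] using g(1)
    by (intro real_polynomial_function.intros(2-4) real_polynomial_function_diff)
      (auto intro: real_polynomial_function.intros(1) bounded_linear_ident)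
  moreover have "\<bar>p x - m x\<bar> \<le> \<delta>" if x: "x \<in> {0..1}" for x
  proof -
    have "\<bar>m 0 - g 0\<bar> \<le> \<delta> / 3" "\<bar>m 1 - g 1\<bar> \<le> \<delta> / 3"
      using g(2)[of 0] g(2)[of 1] by auto
    then have "\<bar>(m 0 - g 0) * (1 - x)\<bar> \<le> \<delta> / 3 * (1 - x)" "\<bar>(m 1 - g 1) * x\<bar> \<le> \<delta> / 3 * x"
      using x mult_right_mono[of "\<bar>m 0 - g 0\<bar>" "\<delta> / 3" "1 - x"]
        mult_right_mono[of "\<bar>m 1 - g 1\<bar>" "\<delta> / 3" x]
      by (simp_all add: abs_mult)
    then have "\<bar>p x - m x\<bar> \<le> \<delta> / 3 + \<delta> / 3 * (1 - x) + \<delta> / 3 * x"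
      using g(2)[OF x] unfolding p_def by linarith
    also have "\<dots> = 2 * \<delta> / 3"
      by (simp add: field_simps)
    finally show ?thesis
      using assms(2) by simp
  qed
  ultimately show thesis
    by (intro that[of p]) (simp_all add: p_def)
qed

lemma exists_cell:
  fixes x :: real and n :: nat
  assumes "0 \<le> x" "x \<le> 1" "0 < n"
  obtains j where "j < n" "real j / n \<le> x" "x \<le> (real j + 1) / n"
proof -
  define k where "k = nat \<lfloor>x * n\<rfloor>"
  have k: "real k \<le> x * n" "x * n < real k + 1"
    using assms by (simp_all add: k_def)
  define j where "j = min k (n - 1)"
  have "real j \<le> x * n"
    using k(1) by (simp add: j_def)
  moreover have "x * n \<le> real j + 1"
  proof (cases "k \<le> n - 1")
    case True
    then show ?thesis
      using k(2) by (simp add: j_def)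
  next
    case False
    then show ?thesis
      using assms by (simp add: j_def of_nat_diff)
  qed
  moreover have "j < n"
    using assms by (simp add: j_def)
  ultimately show thesis
    using assms by (intro that) (simp_all add: divide_le_eq le_divide_eq)
qed

lemma small_cover_of_graph_strip:
  assumes "continuous_on {0..1} m" "0 < \<delta>"
  obtains E where "E \<in> sets lborel" "emeasure lborel E \<le> ennreal (4 * \<delta>)"
    "\<And>z. 0 \<le> Re z \<Longrightarrow> Re z \<le> 1 \<Longrightarrow> \<bar>Im z - m (Re z)\<bar> \<le> \<delta> \<Longrightarrow> z \<in> E"
proof -
  have "uniformly_continuous_on {0..1} m"
    using assms(1) by (intro compact_uniformly_continuous) auto
  then obtain \<eta> where "\<eta> > 0"
    and \<eta>: "\<And>x x'. x \<in> {0..1} \<Longrightarrow> x' \<in> {0..1} \<Longrightarrow> dist x' x < \<eta> \<Longrightarrow> dist (m x') (m x) < \<delta>"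
    unfolding uniformly_continuous_on_def using assms(2) by metis
  obtain n :: nat where n: "0 < n" "1 / n < \<eta>"
    using real_arch_inverse \<open>\<eta> > 0\<close> by (auto simp: inverse_eq_divide)
  define box where "box j = cbox (Complex (j / n) (m (j / n) - 2 * \<delta>)) (Complex ((j + 1) / n) (m (j / n) + 2 * \<delta>))"
    for j :: nat
  define E where "E = (\<Union>j<n. box j)"
  have "emeasure lborel E \<le> (\<Sum>j<n. emeasure lborel (box j))"
    unfolding E_def by (rule emeasure_subadditive_finite) (auto simp: box_def)
  also have "emeasure lborel (box j) = ennreal (1 / n * (4 * \<delta>))" for j
    unfolding box_def using assms(2) n
    by (simp add: emeasure_lborel_cbox_eq Basis_complex_def divide_right_mono) (simp add: field_simps)
  then have "(\<Sum>j<n. emeasure lborel (box j)) = ennreal (4 * \<delta>)"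
    using n assms(2) by (simp add: ennreal_of_nat_eq_real_of_nat ennreal_mult[symmetric])
  finally have "emeasure lborel E \<le> ennreal (4 * \<delta>)" .
  moreover have "z \<in> E" if z: "0 \<le> Re z" "Re z \<le> 1" "\<bar>Im z - m (Re z)\<bar> \<le> \<delta>" for z
  proof -
    obtain j where j: "j < n" "real j / n \<le> Re z" "Re z \<le> (real j + 1) / n"
      using exists_cell[OF z(1,2) n(1)] .
    have "real j / n \<in> {0..1}"
      using j by (auto simp: divide_le_eq)
    moreover have "dist (Re z) (real j / n) < \<eta>"
      using j n by (simp add: dist_real_def add_divide_distrib)
    ultimately have "\<bar>m (Re z) - m (real j / n)\<bar> < \<delta>"
      using \<eta> z by (auto simp: dist_real_def)
    then have "z \<in> box j"
      using j z(3) by (auto simp: box_def cbox_complex_eq add.commute)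
    then show ?thesis
      using j(1) by (auto simp: E_def)
  qed
  ultimately show thesis
    by (intro that) (auto simp: E_def box_def)
qed

section \<open>Comparison of the objectives\<close>

lemma abs_indicator_subgraph_diff_le:
  assumes "\<And>x. x \<in> {0..1} \<Longrightarrow> \<bar>p x - m x\<bar> \<le> \<delta>"
    and "\<And>z. 0 \<le> Re z \<Longrightarrow> Re z \<le> 1 \<Longrightarrow> \<bar>Im z - m (Re z)\<bar> \<le> \<delta> \<Longrightarrow> z \<in> E"
  shows "\<bar>indicator (subgraph m) z - indicator (subgraph p) z\<bar> \<le> (indicator E z :: real)"
proof (cases "z \<in> subgraph m \<longleftrightarrow> z \<in> subgraph p")
  case False
  then have "0 \<le> Re z" "Re z \<le> 1" "Im z < m (Re z) \<longleftrightarrow> \<not> Im z < p (Re z)"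
    by (auto simp: subgraph_def)
  then have "z \<in> E"
    using assms by (force simp: abs_le_iff)
  then show ?thesis
    by (simp add: indicator_def)
qed (simp add: indicator_def)

lemma sum_abs_indicator_subgraph_le:
  fixes v :: complex
  assumes "1 \<le> N"
    and "\<And>x. x \<in> {0..1} \<Longrightarrow> \<bar>p x - median N (\<lambda>i. f i x)\<bar> \<le> \<delta>"
    and "\<And>z. 0 \<le> Re z \<Longrightarrow> Re z \<le> 1 \<Longrightarrow> \<bar>Im z - median N (\<lambda>i. f i (Re z))\<bar> \<le> \<delta> \<Longrightarrow> z \<in> E"
  shows "(\<Sum>i<N. \<bar>indicator (subgraph (f i)) z - indicator (subgraph p) z\<bar>)
           \<le> (\<Sum>i<N. cmod (of_real (indicator (subgraph (f i)) z) + v)) + real N * indicator E z"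
proof -
  let ?m = "\<lambda>x. median N (\<lambda>i. f i x)" and ?I = "\<lambda>h. indicator (subgraph h) z :: real"
  have "(\<Sum>i<N. \<bar>?I (f i) - ?I p\<bar>) \<le> (\<Sum>i<N. \<bar>?I (f i) - ?I ?m\<bar> + \<bar>?I ?m - ?I p\<bar>)"
    by (intro sum_mono) linarith
  also have "\<dots> = (\<Sum>i<N. \<bar>?I (f i) - ?I ?m\<bar>) + N * \<bar>?I ?m - ?I p\<bar>"
    by (simp add: sum.distrib)
  also have "(\<Sum>i<N. \<bar>?I (f i) - ?I ?m\<bar>) \<le> (\<Sum>i<N. \<bar>?I (f i) - (- Re v)\<bar>)"
    by (rule sum_abs_indicator_subgraph_median_le[OF assms(1)])
  also have "\<dots> \<le> (\<Sum>i<N. cmod (of_real (?I (f i)) + v))"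
    using abs_Re_le_cmod by (intro sum_mono) (metis Re_complex_of_real diff_minus_eq_add plus_complex.sel(1))
  also have "N * \<bar>?I ?m - ?I p\<bar> \<le> real N * indicator E z"
    using assms(2,3) by (intro mult_left_mono abs_indicator_subgraph_diff_le) auto
  finally show ?thesis
    by simp
qed

lemma abs_winding_number_join_reversepath:
  assumes "path g" "path h" "pathfinish g = pathfinish h"
    and "z \<notin> path_image g" "z \<notin> path_image h"
  shows "abs_winding_number (g +++ reversepath h) z = ennreal (cmod (winding_number g z - winding_number h z))"
  using assms by (simp add: abs_winding_number_def path_image_join winding_number_join winding_number_reversepath)

lemma sum_abs_winding_number_le:
  fixes f :: "nat \<Rightarrow> real \<Rightarrow> real"
  assumes N: "1 \<le> N"
    and f: "\<And>i. i < N \<Longrightarrow> continuous_on {0..1} (f i)" "\<And>i. i < N \<Longrightarrow> f i 0 = A \<and> f i 1 = B"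
    and p: "continuous_on {0..1} p" "p 0 = A" "p 1 = B"
    and near: "\<And>x. x \<in> {0..1} \<Longrightarrow> \<bar>p x - median N (\<lambda>i. f i x)\<bar> \<le> \<delta>"
    and cover: "\<And>z. 0 \<le> Re z \<Longrightarrow> Re z \<le> 1 \<Longrightarrow> \<bar>Im z - median N (\<lambda>i. f i (Re z))\<bar> \<le> \<delta> \<Longrightarrow> z \<in> E"
    and \<gamma>: "path \<gamma>" "pathfinish \<gamma> = Complex 0 A"
    and z: "z \<notin> path_image \<gamma>" "\<And>i. i < N \<Longrightarrow> z \<notin> path_image (ograph (f i))"
      "z \<notin> path_image (ograph p)" "z \<notin> path_image (ograph (\<lambda>x. A + (B - A) * x))"
  shows "(\<Sum>i<N. abs_winding_number (ograph (f i) +++ reversepath (ograph p)) z)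
           \<le> (\<Sum>i<N. abs_winding_number (ograph (f i) +++ reversepath \<gamma>) z) + of_nat N * indicator E z"
proof -
  let ?I = "\<lambda>h. indicator (subgraph h) z :: real"
  have "0 < N"
    using N by simp
  define v where "v = winding_number (ograph (f 0)) z - of_real (?I (f 0)) - winding_number \<gamma> z"
  have p_eq: "abs_winding_number (ograph (f i) +++ reversepath (ograph p)) z = ennreal \<bar>?I (f i) - ?I p\<bar>"
    if "i < N" for i
  proof -
    have "winding_number (ograph (f i)) z - winding_number (ograph p) z = of_real (?I (f i) - ?I p)"
      using f(2)[OF that] p by (intro winding_number_ograph_diff[OF f(1)[OF that] p(1) _ _ _ _ z(2)[OF that] z(3,4)]) auto
    then show ?thesis
      using f[OF that] p z(2)[OF that] z(3)
      by (simp add: abs_winding_number_join_reversepath path_ograph del: of_real_diff)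
  qed
  have \<gamma>_eq: "abs_winding_number (ograph (f i) +++ reversepath \<gamma>) z = ennreal (cmod (of_real (?I (f i)) + v))"
    if "i < N" for i
  proof -
    have "winding_number (ograph (f i)) z - winding_number (ograph (f 0)) z = of_real (?I (f i) - ?I (f 0))"
      using f(2)[OF that] f(2)[OF \<open>0 < N\<close>]
      by (intro winding_number_ograph_diff[OF f(1)[OF that] f(1)[OF \<open>0 < N\<close>] _ _ _ _
            z(2)[OF that] z(2)[OF \<open>0 < N\<close>] z(4)]) auto
    then have "winding_number (ograph (f i)) z - winding_number \<gamma> z = of_real (?I (f i)) + v"
      by (simp add: v_def algebra_simps)
    then show ?thesis
      using f[OF that] \<gamma> z(1) z(2)[OF that]
      by (simp add: abs_winding_number_join_reversepath path_ograph)
  qed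
  have "(\<Sum>i<N. abs_winding_number (ograph (f i) +++ reversepath (ograph p)) z)
      = ennreal (\<Sum>i<N. \<bar>?I (f i) - ?I p\<bar>)"
    by (simp add: p_eq sum_ennreal)
  also have "\<dots> \<le> ennreal ((\<Sum>i<N. cmod (of_real (?I (f i)) + v)) + real N * indicator E z)"
    by (intro ennreal_leI sum_abs_indicator_subgraph_le[OF N near cover])
  also have "\<dots> = (\<Sum>i<N. ennreal (cmod (of_real (?I (f i)) + v))) + of_nat N * indicator E z"
    by (simp add: sum_ennreal ennreal_plus sum_nonneg ennreal_mult ennreal_of_nat_eq_real_of_nat indicator_def)
  also have "\<dots> = (\<Sum>i<N. abs_winding_number (ograph (f i) +++ reversepath \<gamma>) z) + of_nat N * indicator E z"
    by (simp add: \<gamma>_eq)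
  finally show ?thesis .
qed

lemma sum_mass2_ograph_le:
  fixes f :: "nat \<Rightarrow> real \<Rightarrow> real"
  assumes N: "1 \<le> N"
    and f: "\<And>i. i < N \<Longrightarrow> continuous_on {0..1} (f i)"
      "\<And>i x. i < N \<Longrightarrow> x \<in> {0<..<1} \<Longrightarrow> f i differentiable (at x)"
      "\<And>i. i < N \<Longrightarrow> f i 0 = A \<and> f i 1 = B"
    and p: "continuous_on {0..1} p" "\<And>x. x \<in> {0<..<1} \<Longrightarrow> p differentiable (at x)" "p 0 = A" "p 1 = B"
    and near: "\<And>x. x \<in> {0..1} \<Longrightarrow> \<bar>p x - median N (\<lambda>i. f i x)\<bar> \<le> \<delta>"
    and E: "E \<in> sets lborel"
    and cover: "\<And>z. 0 \<le> Re z \<Longrightarrow> Re z \<le> 1 \<Longrightarrow> \<bar>Im z - median N (\<lambda>i. f i (Re z))\<bar> \<le> \<delta> \<Longrightarrow> z \<in> E"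
    and \<gamma>: "valid_path \<gamma>" "pathfinish \<gamma> = Complex 0 A"
  shows "(\<Sum>i<N. mass2 (ograph (f i) +++ reversepath (ograph p)))
           \<le> (\<Sum>i<N. mass2 (ograph (f i) +++ reversepath \<gamma>)) + of_nat N * emeasure lborel E"
proof -
  have "path \<gamma>"
    using \<gamma>(1) by (rule valid_path_imp_path)
  define chord where "chord = ograph (\<lambda>x. A + (B - A) * x)"
  define bad where "bad = path_image \<gamma> \<union> (\<Union>i<N. path_image (ograph (f i))) \<union> path_image (ograph p)
      \<union> path_image chord"
  have null: "bad \<in> null_sets lborel"
    unfolding bad_def chord_def using f(1,2) p(1,2) \<gamma>(1)
    by (intro null_sets.Un null_sets_UN' null_sets_path_image_ograph null_sets_path_image_valid_path)
      (auto intro!: continuous_intros)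
  have "AE z in lborel. (\<Sum>i<N. abs_winding_number (ograph (f i) +++ reversepath (ograph p)) z)
      \<le> (\<Sum>i<N. abs_winding_number (ograph (f i) +++ reversepath \<gamma>) z) + of_nat N * indicator E z"
    using AE_not_in[OF null]
  proof (rule AE_mp, intro AE_I2 impI)
    fix z
    assume "z \<notin> bad"
    then show "(\<Sum>i<N. abs_winding_number (ograph (f i) +++ reversepath (ograph p)) z)
      \<le> (\<Sum>i<N. abs_winding_number (ograph (f i) +++ reversepath \<gamma>) z) + of_nat N * indicator E z"
      by (intro sum_abs_winding_number_le[OF N f(1) f(3) p(1) p(3,4) near cover \<open>path \<gamma>\<close> \<gamma>(2)])
        (auto simp: bad_def chord_def)
  qed
  moreover have meas: "abs_winding_number (ograph (f i) +++ reversepath c) \<in> borel_measurable lborel"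
    if "i < N" "path c" "pathfinish c = Complex 0 A" for i c
    using f(1,3)[OF that(1)] that(2,3)
    by (intro borel_measurable_abs_winding_number path_join_imp) (auto simp: path_ograph)
  ultimately have "(\<integral>\<^sup>+ z. (\<Sum>i<N. abs_winding_number (ograph (f i) +++ reversepath (ograph p)) z) \<partial>lborel)
      \<le> (\<integral>\<^sup>+ z. (\<Sum>i<N. abs_winding_number (ograph (f i) +++ reversepath \<gamma>) z) \<partial>lborel)
        + of_nat N * emeasure lborel E"
    using p(1,3) \<open>path \<gamma>\<close> \<gamma>(2) E
    by (subst nn_integral_cmult_indicator[OF E, symmetric], subst nn_integral_add[symmetric])
      (auto intro!: nn_integral_mono_AE path_ograph)
  moreover have "(\<integral>\<^sup>+ z. (\<Sum>i<N. abs_winding_number (ograph (f i) +++ reversepath c) z) \<partial>lborel)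
      = (\<Sum>i<N. mass2 (ograph (f i) +++ reversepath c))"
    if "path c" "pathfinish c = Complex 0 A" for c
    unfolding mass2_eq_nn_integral using meas[OF _ that] by (intro nn_integral_sum) simp
  ultimately show ?thesis
    using p(1,3) \<open>path \<gamma>\<close> \<gamma>(2) by (simp add: path_ograph)
qed

lemma INF_ograph_le_median_obj:
  fixes f :: "nat \<Rightarrow> real \<Rightarrow> real"
  assumes N: "1 \<le> N"
    and f: "\<And>i. i < N \<Longrightarrow> continuous_on {0..1} (f i)"
      "\<And>i x. i < N \<Longrightarrow> x \<in> {0<..<1} \<Longrightarrow> f i differentiable (at x)"
      "\<And>i. i < N \<Longrightarrow> f i 0 = f 0 0 \<and> f i 1 = f 0 1"
    and \<gamma>: "valid_path \<gamma>" "pathfinish \<gamma> = Complex 0 (f 0 0)"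
    and "0 < \<delta>"
  shows "(INF g \<in> {g. competitor f (ograph g)}. median_obj lam f N (ograph g))
           \<le> median_obj lam f N \<gamma> + ennreal lam * (of_nat N * ennreal (4 * \<delta>))"
proof -
  let ?m = "\<lambda>x. median N (\<lambda>i. f i x)"
  have m: "continuous_on {0..1} ?m" "?m 0 = f 0 0" "?m 1 = f 0 1"
    using continuous_on_median[OF N f(1)]
      median_const[OF N conjunct1[OF f(3)]] median_const[OF N conjunct2[OF f(3)]]
    by auto
  obtain E where E: "E \<in> sets lborel" "emeasure lborel E \<le> ennreal (4 * \<delta>)"
    "\<And>z. 0 \<le> Re z \<Longrightarrow> Re z \<le> 1 \<Longrightarrow> \<bar>Im z - ?m (Re z)\<bar> \<le> \<delta> \<Longrightarrow> z \<in> E"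
    using small_cover_of_graph_strip[OF m(1) \<open>0 < \<delta>\<close>] by blast
  obtain p where p: "real_polynomial_function p" "p 0 = f 0 0" "p 1 = f 0 1"
    "\<And>x. x \<in> {0..1} \<Longrightarrow> \<bar>p x - ?m x\<bar> \<le> \<delta>"
    using exists_polynomial_near[OF m(1) \<open>0 < \<delta>\<close>] unfolding m(2,3) by blast
  have p_regular: "continuous_on {0..1} p" "\<And>x. p differentiable (at x)"
    using p(1) by (simp_all add: real_polynomial_function_eq continuous_on_polymonial_function
        differentiable_at_polynomial_function)
  have "(INF g \<in> {g. competitor f (ograph g)}. median_obj lam f N (ograph g)) \<le> median_obj lam f N (ograph p)"
    using p by (intro INF_lower) (simp add: competitor_def valid_path_ograph_polynomial)
  also have "\<dots> = ennreal lam * (\<Sum>i<N. mass2 (ograph (f i) +++ reversepath (ograph p)))"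
    by (simp add: median_obj_def sum_distrib_left)
  also have "\<dots> \<le> ennreal lam * ((\<Sum>i<N. mass2 (ograph (f i) +++ reversepath \<gamma>)) + of_nat N * ennreal (4 * \<delta>))"
  proof (rule mult_left_mono)
    have "of_nat N * emeasure lborel E \<le> of_nat N * ennreal (4 * \<delta>)"
      using E(2) by (rule mult_left_mono) simp
    then show "(\<Sum>i<N. mass2 (ograph (f i) +++ reversepath (ograph p)))
        \<le> (\<Sum>i<N. mass2 (ograph (f i) +++ reversepath \<gamma>)) + of_nat N * ennreal (4 * \<delta>)"
      using sum_mass2_ograph_le[OF N f p_regular p(2,3,4) E(1,3) \<gamma>] by (meson add_left_mono order_trans)
  qed simp
  also have "\<dots> = median_obj lam f N \<gamma> + ennreal lam * (of_nat N * ennreal (4 * \<delta>))"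
    by (simp add: median_obj_def sum_distrib_left distrib_left)
  finally show ?thesis .
qed

theorem mainTheorem6:
  fixes f :: "nat \<Rightarrow> real \<Rightarrow> real" and N :: nat and lam :: real
  assumes "N \<ge> 1"
    and "\<And>i. i < N \<Longrightarrow> smooth_on_unit (f i)"
    and "\<And>i. i < N \<Longrightarrow> f i 0 = f 0 0 \<and> f i 1 = f 0 1"
    and "lam > 0"
  shows "(INF \<gamma> \<in> {\<gamma>. competitor f \<gamma> \<and> \<not> is_graph_param \<gamma>}. median_obj lam f N \<gamma>)
         \<ge> (INF g \<in> {g. competitor f (ograph g)}. median_obj lam f N (ograph g))"
proof (rule INF_greatest)
  have f: "\<And>i. i < N \<Longrightarrow> continuous_on {0..1} (f i)"
    "\<And>i x. i < N \<Longrightarrow> x \<in> {0<..<1} \<Longrightarrow> f i differentiable (at x)"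
    using assms(2) smooth_on_unit_imp_continuous_differentiable by blast+
  fix \<gamma>
  assume "\<gamma> \<in> {\<gamma>. competitor f \<gamma> \<and> \<not> is_graph_param \<gamma>}"
  then have \<gamma>: "valid_path \<gamma>" "pathfinish \<gamma> = Complex 0 (f 0 0)"
    by (auto simp: competitor_def)
  show "(INF g \<in> {g. competitor f (ograph g)}. median_obj lam f N (ograph g)) \<le> median_obj lam f N \<gamma>"
  proof (rule ennreal_le_epsilon)
    fix e :: real
    assume "0 < e"
    define \<delta> where "\<delta> = e / (4 * N * lam)"
    have "0 < \<delta>"
      using \<open>0 < e\<close> assms(1,4) by (simp add: \<delta>_def)
    have "ennreal lam * (of_nat N * ennreal (4 * \<delta>)) = ennreal (lam * (N * (4 * \<delta>)))"
      using assms(4) \<open>0 < \<delta>\<close> by (simp add: ennreal_mult ennreal_of_nat_eq_real_of_nat)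
    also have "lam * (N * (4 * \<delta>)) = e"
      using assms(1,4) by (simp add: \<delta>_def)
    finally have cost: "ennreal lam * (of_nat N * ennreal (4 * \<delta>)) = ennreal e" .
    show "(INF g \<in> {g. competitor f (ograph g)}. median_obj lam f N (ograph g)) \<le> median_obj lam f N \<gamma> + ennreal e"
      using INF_ograph_le_median_obj[where f = f and lam = lam, OF assms(1) f assms(3) \<gamma> \<open>0 < \<delta>\<close>]
      unfolding cost .
  qed
qed

end
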